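(* Let $\lambda_1,\lambda_2\in\mathbb{C}$ and let $\alpha,\beta\in\mathbb{C}$ with $\alpha+\beta\notin\mathbb{Z}$ and $\alpha\notin\{-1,-2,-3,\dots\}$. On $W=V_{\lambda_1}\otimes V_{\lambda_2}$ (with basis $e_n\otimes f_m$, $n,m\ge 0$, where $\{e_n\}$ is the standard basis of $V_{\lambda_1}$ and $\{f_m\}$ that of $V_{\lambda_2}$) put $H^{(1)}=H\otimes\mathbb{I}$, $H^{(2)}=\mathbb{I}\otimes H$, and let $D=H^{(1)}-H^{(2)}-\lambda_1+\lambda_2+2\alpha+2\beta+2$, a diagonal operator which is invertible. Define operators on $W$ by $$\Delta(H)=H^{(1)}+H^{(2)},$$ $$\Delta(E)=D^{-1}\Big((H^{(1)}-\lambda_1+2\alpha+2\beta+2)(E\otimes\mathbb{I})+(\lambda_2-H^{(2)}+2\alpha+2\beta+2)(\mathbb{I}\otimes E)\Big),$$ $$\Delta(F)=D^{-1}\Big((H^{(1)}-\lambda_1+2\alpha+2)(F\otimes\mathbb{I})+(\lambda_2-H^{(2)}+2\beta)(\mathbb{I}\otimes F)\Big).$$ Then (a) $\Delta(H),\Delta(E),\Delta(F)$ satisfy $[\Delta(H),\Delta(E)]=2\Delta(E)$, $[\Delta(H),\Delta(F)]=-2\Delta(F)$, $[\Delta(E),\Delta(F)]=1$, i.e. they define a representation of the oscillator algebra on $W$; and (b) for all integers $0\le k\le N$, the vectors $w_{k,N}=\sum_{n=0}^N Q_n(k,N)\,e_n\otimes f_{N-n}$ satisfy $\Delta(H)w_{k,N}=(\lambda_1+\lambda_2+2N)w_{k,N}$,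 $\Delta(E)w_{k,N}=w_{k,N+1}$, and $\Delta(F)w_{k,N}=-(N-k)\,w_{k,N-1}$ (with the convention $w_{k,k-1}=0$). In other words, the $Q_n(k,N)$ are the Clebsch–Gordan coefficients realizing, with respect to this tensor product action, vectors of the oscillator-algebra module $V_{\lambda_1+\lambda_2+2k}$ inside $V_{\lambda_1}\otimes V_{\lambda_2}$.
   Context: The oscillator algebra is generated by $H,E,F$ with relations $[H,E]=2E$, $[H,F]=-2F$, $[E,F]=1$. For $\lambda\in\mathbb{C}$, $V_\lambda$ is the module with basis $\{|\lambda,n\rangle: n=0,1,2,\dots\}$ and action $H|\lambda,n\rangle=(\lambda+2n)|\lambda,n\rangle$, $E|\lambda,n\rangle=|\lambda,n+1\rangle$, $F|\lambda,n\rangle=-n|\lambda,n-1\rangle$. Products of operators such as $D^{-1}(\cdots)(E\otimes\mathbb{I})$ mean composition (first apply $E\otimes\mathbb{I}$, then the diagonal operators). The functions $Q_n(k,N)$ (proportional to Hahn polynomials) are $$Q_n(k,N)=\binom{N}{n}\,{}_3F_2\!\left(\begin{matrix}-n,\ n+\alpha+\beta-N+1,\ -k\\ \alpha+1,\ -N\end{matrix}\;\Big|\;1\right),$$ where ${}_3F_2$ is the terminating hypergeometric series $\sum_{j\ge0}\frac{(a_1)_j(a_2)_j(a_3)_j}{j!(b_1)_j(b_2)_j}z^j$ with Pochhammer symbols $(a)_j=a(a+1)\cdots(a+j-1)$ (the sum terminates at $j=\min(n,k)\le N$). *)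

theory Defs
  imports Complex_Main
begin

text \<open>Vectors of W = V_l1 (x) V_l2 are represented by their coefficient functions
  v :: nat * nat => complex, i.e. v = sum of v(n,m) e_n (x) f_m.  Elements of W
  are those with finite support.\<close>

type_synonym tvec = "nat \<times> nat \<Rightarrow> complex"

definition diag :: "(nat \<times> nat \<Rightarrow> complex) \<Rightarrow> tvec \<Rightarrow> tvec" where
  "diag d v = (\<lambda>p. d p * v p)"

definition vadd :: "tvec \<Rightarrow> tvec \<Rightarrow> tvec" where
  "vadd v w = (\<lambda>p. v p + w p)"

definition H1 :: "complex \<Rightarrow> tvec \<Rightarrow> tvec" where
  "H1 l1 = diag (\<lambda>(n,m). l1 + 2 * of_nat n)"
definition H2 :: "complex \<Rightarrow> tvec \<Rightarrow> tvec" where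
  "H2 l2 = diag (\<lambda>(n,m). l2 + 2 * of_nat m)"

text \<open>E (x) I : e_n (x) f_m |-> e_(n+1) (x) f_m ; I (x) E analogously\<close>
definition E1 :: "tvec \<Rightarrow> tvec" where
  "E1 v = (\<lambda>(n,m). if n = 0 then 0 else v (n - 1, m))"
definition E2 :: "tvec \<Rightarrow> tvec" where
  "E2 v = (\<lambda>(n,m). if m = 0 then 0 else v (n, m - 1))"

text \<open>F (x) I : e_n (x) f_m |-> -n e_(n-1) (x) f_m ; I (x) F analogously\<close>
definition F1 :: "tvec \<Rightarrow> tvec" where
  "F1 v = (\<lambda>(n,m). - (of_nat n + 1) * v (n + 1, m))"
definition F2 :: "tvec \<Rightarrow> tvec" where
  "F2 v = (\<lambda>(n,m). - (of_nat m + 1) * v (n, m + 1))"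

definition Dval :: "complex \<Rightarrow> complex \<Rightarrow> complex \<Rightarrow> complex \<Rightarrow> nat \<times> nat \<Rightarrow> complex" where
  "Dval l1 l2 a b = (\<lambda>(n,m). (l1 + 2 * of_nat n) - (l2 + 2 * of_nat m) - l1 + l2 + 2*a + 2*b + 2)"

definition Dinv :: "complex \<Rightarrow> complex \<Rightarrow> complex \<Rightarrow> complex \<Rightarrow> tvec \<Rightarrow> tvec" where
  "Dinv l1 l2 a b = diag (\<lambda>p. 1 / Dval l1 l2 a b p)"

definition DeltaH :: "complex \<Rightarrow> complex \<Rightarrow> tvec \<Rightarrow> tvec" where
  "DeltaH l1 l2 v = vadd (H1 l1 v) (H2 l2 v)"

definition DeltaE :: "complex \<Rightarrow> complex \<Rightarrow> complex \<Rightarrow> complex \<Rightarrow> tvec \<Rightarrow> tvec" where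
  "DeltaE l1 l2 a b v = Dinv l1 l2 a b
     (vadd (diag (\<lambda>(n,m). (l1 + 2 * of_nat n) - l1 + 2*a + 2*b + 2) (E1 v))
           (diag (\<lambda>(n,m). l2 - (l2 + 2 * of_nat m) + 2*a + 2*b + 2) (E2 v)))"

definition DeltaF :: "complex \<Rightarrow> complex \<Rightarrow> complex \<Rightarrow> complex \<Rightarrow> tvec \<Rightarrow> tvec" where
  "DeltaF l1 l2 a b v = Dinv l1 l2 a b
     (vadd (diag (\<lambda>(n,m). (l1 + 2 * of_nat n) - l1 + 2*a + 2) (F1 v))
           (diag (\<lambda>(n,m). l2 - (l2 + 2 * of_nat m) + 2*b) (F2 v)))"

definition commutator :: "(tvec \<Rightarrow> tvec) \<Rightarrow> (tvec \<Rightarrow> tvec) \<Rightarrow> tvec \<Rightarrow> tvec" where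
  "commutator A B v = (\<lambda>p. A (B v) p - B (A v) p)"

definition Q :: "complex \<Rightarrow> complex \<Rightarrow> nat \<Rightarrow> nat \<Rightarrow> nat \<Rightarrow> complex" where
  "Q a b n k N = of_nat (N choose n) *
     (\<Sum>j\<le>min n k. pochhammer (- of_nat n) j * pochhammer (of_nat n + a + b - of_nat N + 1) j
                    * pochhammer (- of_nat k) j
                  / (fact j * pochhammer (a + 1) j * pochhammer (- of_nat N) j))"

definition wvec :: "complex \<Rightarrow> complex \<Rightarrow> nat \<Rightarrow> nat \<Rightarrow> tvec" where
  "wvec a b k N = (\<lambda>(n,m). if n + m = N then Q a b n k N else 0)"

end

theory Submission
  imports Defs
begin

(* Halving D, the operators act on coefficients by explicit formulas with denominator
   n - m + a + b + 1, which never vanishes because a + b is not an integer; the commutation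
   relations are then rational identities in n, m, a, b.
   For the vectors w_(k,N), Q_n(k,N) is expanded as sum_j c_j(k) T_j(n,N) with
   c_j(k) = (-1)^j C(k,j) / (a+1)_j and T_j(n,N) = C(N-j, n-j) (n-N+a+b+1)_j.  The relation for
   Delta(E) then holds term by term in j, by Pascal's rule and absorption.  For Delta(F) the
   j-th term is paired with T_(j-1); the recurrence (j+1)(a+j+1) c_(j+1) = (j-k) c_j, available
   because a is not a negative integer, turns this shift into the eigenvalue factor N - k. *)

lemma divide_double_cancel: "z = 2 * y \<Longrightarrow> 1 / (2 * x) * z = y / (x :: 'a :: field_char_0)"
  by (cases "x = 0") simp_all

lemma pochhammer_minus_of_nat:
  "pochhammer (- of_nat n :: 'a :: field_char_0) j = (-1) ^ j * fact j * of_nat (n choose j)"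
proof -
  have "(of_nat (n choose j) :: 'a) = (-1) ^ j * pochhammer (- of_nat n) j / fact j"
    by (simp add: binomial_gbinomial gbinomial_pochhammer)
  then have "(-1) ^ j * fact j * (of_nat (n choose j) :: 'a)
      = ((-1) ^ j * (-1) ^ j) * pochhammer (- of_nat n) j"
    by simp
  then show ?thesis
    by (simp flip: power_mult_distrib)
qed

lemma pochhammer_shift: "z * pochhammer (z + 1) j = (z + of_nat j) * pochhammer z j"
  by (metis pochhammer_rec pochhammer_rec')

lemma of_nat_Suc_mult_binomial_Suc:
  "(of_nat q + 1) * of_nat (p choose Suc q)
     = (of_nat p - of_nat q) * (of_nat (p choose q) :: 'a :: comm_ring_1)"
proof (cases "q \<le> p")
  case True
  have "Suc q * (p choose Suc q) = (p - q) * (p choose q)"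
    by (metis binomial_absorb_comp binomial_absorption)
  then have "of_nat (Suc q) * of_nat (p choose Suc q)
      = (of_nat (p - q) * of_nat (p choose q) :: 'a)"
    by (simp only: of_nat_mult [symmetric])
  then show ?thesis
    using True by (simp add: of_nat_diff add.commute)
next
  case False
  then show ?thesis
    by (simp add: binomial_eq_0)
qed

lemma of_nat_Suc_times_binomial:
  "(of_nat q + 1) * of_nat (Suc p choose Suc q)
     = (of_nat p + 1) * (of_nat (p choose q) :: 'a :: comm_ring_1)"
  using Suc_times_binomial [of q p] by (metis of_nat_Suc of_nat_mult add.commute)

lemma of_nat_binomial_absorb_comp:
  "(of_nat p - of_nat q + 1) * of_nat (Suc p choose q)
     = (of_nat p + 1) * (of_nat (p choose q) :: 'a :: comm_ring_1)"
proof (cases "q \<le> p")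
  case True
  have "(Suc p - q) * (Suc p choose q) = Suc p * (p choose q)"
    using binomial_absorb_comp [of "Suc p" q] by simp
  then have "of_nat (Suc p - q) * of_nat (Suc p choose q)
      = (of_nat (Suc p) * of_nat (p choose q) :: 'a)"
    by (simp only: of_nat_mult [symmetric])
  then show ?thesis
    using True by (simp add: of_nat_diff Suc_diff_le add.commute)
next
  case False
  then show ?thesis
    by (cases "q = Suc p") (simp_all add: binomial_eq_0)
qed

lemma Dval_eq: "Dval l1 l2 a b (n, m) = 2 * (of_nat n - of_nat m + a + b + 1)"
  by (simp add: Dval_def algebra_simps)

lemma half_Dval_nonzero:
  fixes a b :: complex
  assumes "a + b \<notin> \<int>"
  shows "of_nat n - of_nat m + a + b + 1 \<noteq> 0"
proof
  assume "of_nat n - of_nat m + a + b + 1 = 0"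
  then have "a + b = of_int (int m - int n - 1)"
    by (simp add: algebra_simps eq_neg_iff_add_eq_0)
  with assms show False
    by (metis Ints_of_int)
qed

lemma DeltaH_apply: "DeltaH l1 l2 v (n, m) = (l1 + l2 + 2 * of_nat (n + m)) * v (n, m)"
  by (simp add: DeltaH_def H1_def H2_def diag_def vadd_def algebra_simps)

lemma DeltaE_apply:
  "DeltaE l1 l2 a b v (n, m) =
     ((of_nat n + a + b + 1) * (if n = 0 then 0 else v (n - 1, m))
      + (a + b + 1 - of_nat m) * (if m = 0 then 0 else v (n, m - 1)))
     / (of_nat n - of_nat m + a + b + 1)"
  unfolding DeltaE_def Dinv_def diag_def vadd_def E1_def E2_def Dval_eq prod.case
  by (rule divide_double_cancel) (simp add: algebra_simps)

lemma DeltaF_apply: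
  "DeltaF l1 l2 a b v (n, m) =
     - ((of_nat n + a + 1) * (of_nat n + 1) * v (Suc n, m)
        + (b - of_nat m) * (of_nat m + 1) * v (n, Suc m))
     / (of_nat n - of_nat m + a + b + 1)"
  unfolding DeltaF_def Dinv_def diag_def vadd_def F1_def F2_def Dval_eq prod.case
  by (rule divide_double_cancel) (simp add: algebra_simps)

lemma DeltaH_DeltaE_commutator:
  "commutator (DeltaH l1 l2) (DeltaE l1 l2 a b) v = (\<lambda>p. 2 * DeltaE l1 l2 a b v p)"
proof (intro ext, clarify)
  fix n m
  let ?d = "of_nat n - of_nat m + a + b + 1 :: complex"
  show "commutator (DeltaH l1 l2) (DeltaE l1 l2 a b) v (n, m) = 2 * DeltaE l1 l2 a b v (n, m)"
    unfolding commutator_def DeltaH_apply DeltaE_apply times_divide_eq_right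
      diff_divide_distrib [symmetric]
    by (rule arg_cong [where f = "\<lambda>t. t / ?d"])
      (cases n; cases m; simp add: DeltaH_apply algebra_simps)
qed

lemma DeltaH_DeltaF_commutator:
  "commutator (DeltaH l1 l2) (DeltaF l1 l2 a b) v = (\<lambda>p. - 2 * DeltaF l1 l2 a b v p)"
proof (intro ext, clarify)
  fix n m
  let ?d = "of_nat n - of_nat m + a + b + 1 :: complex"
  show "commutator (DeltaH l1 l2) (DeltaF l1 l2 a b) v (n, m) = - 2 * DeltaF l1 l2 a b v (n, m)"
    unfolding commutator_def DeltaH_apply DeltaF_apply times_divide_eq_right
      diff_divide_distrib [symmetric]
    by (rule arg_cong [where f = "\<lambda>t. t / ?d"]) (simp add: DeltaH_apply algebra_simps)
qed

lemma DeltaE_DeltaF_commutator: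
  fixes a b :: complex
  assumes ab: "a + b \<notin> \<int>"
  shows "commutator (DeltaE l1 l2 a b) (DeltaF l1 l2 a b) v = v"
proof (intro ext, clarify)
  fix n m
  define x y where "x = (of_nat n :: complex)" and "y = (of_nat m :: complex)"
  define d where "d = x - y + a + b + 1"
  define L where "L = (if n = 0 then 0 else v (n - 1, Suc m))"
  define R where "R = (if m = 0 then 0 else v (Suc n, m - 1))"
  have "d \<noteq> 0" "d + 1 \<noteq> 0" "d - 1 \<noteq> 0"
    using half_Dval_nonzero [OF ab, of n m] half_Dval_nonzero [OF ab, of "Suc n" m]
      half_Dval_nonzero [OF ab, of n "Suc m"]
    by (simp_all add: d_def x_def y_def algebra_simps)
  \<comment> \<open>On the boundary n = 0 or m = 0 the missing neighbours come with a factor x or y that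
    vanishes there, so one formula covers all four cases.\<close>
  have EF: "DeltaE l1 l2 a b (DeltaF l1 l2 a b v) (n, m) =
      ((x + a + b + 1) * (- (x * (x + a) * v (n, m) + (b - y) * (y + 1) * L) / (d - 1))
       + (a + b + 1 - y) * (- ((x + a + 1) * (x + 1) * R + (b - y + 1) * y * v (n, m)) / (d + 1)))
      / d"
    unfolding DeltaE_apply DeltaF_apply L_def R_def x_def y_def d_def
    by (cases n; cases m) (simp_all add: algebra_simps)
  have FE: "DeltaF l1 l2 a b (DeltaE l1 l2 a b v) (n, m) =
      - ((x + a + 1) * (x + 1) * (((x + a + b + 2) * v (n, m) + (a + b + 1 - y) * R) / (d + 1))
         + (b - y) * (y + 1) * (((x + a + b + 1) * L + (a + b - y) * v (n, m)) / (d - 1))) / d"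
    unfolding DeltaE_apply DeltaF_apply L_def R_def x_def y_def d_def
    by (cases n; cases m) (simp_all add: algebra_simps)
  show "commutator (DeltaE l1 l2 a b) (DeltaF l1 l2 a b) v (n, m) = v (n, m)"
    unfolding commutator_def EF FE using \<open>d \<noteq> 0\<close> \<open>d + 1 \<noteq> 0\<close> \<open>d - 1 \<noteq> 0\<close>
    by (simp add: divide_simps) (simp add: d_def algebra_simps)
qed

definition hahn_coeff :: "complex \<Rightarrow> nat \<Rightarrow> nat \<Rightarrow> complex" where
  "hahn_coeff a k j = (-1) ^ j * of_nat (k choose j) / pochhammer (a + 1) j"

(* The guard matters: with truncated subtraction, (N - j) choose (n - j) is 1, not 0, for j > n. *)
definition hahn_term :: "complex \<Rightarrow> nat \<Rightarrow> nat \<Rightarrow> nat \<Rightarrow> complex" where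
  "hahn_term c j n N =
     (if j \<le> n then of_nat ((N - j) choose (n - j)) * pochhammer (of_nat n - of_nat N + c + 1) j
      else 0)"

lemma Q_summand_eq:
  assumes "j \<le> n" "n \<le> N"
  shows "of_nat (N choose n) *
           (pochhammer (- of_nat n) j * pochhammer (of_nat n + a + b - of_nat N + 1) j
            * pochhammer (- of_nat k) j
            / (fact j * pochhammer (a + 1) j * pochhammer (- of_nat N) j))
         = hahn_coeff a k j * hahn_term (a + b) j n N"
proof -
  have "(N choose n) * (n choose j) = (N choose j) * ((N - j) choose (n - j))"
    using assms by (simp add: choose_mult)
  then have binom: "of_nat (N choose n) * of_nat (n choose j)
      = of_nat (N choose j) * (of_nat ((N - j) choose (n - j)) :: complex)"
    by (simp flip: of_nat_mult)
  have "of_nat (N choose j) \<noteq> (0 :: complex)"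
    using assms by simp
  with assms binom show ?thesis
    by (cases "pochhammer (a + 1) j = 0")
      (simp_all add: hahn_coeff_def hahn_term_def pochhammer_minus_of_nat field_simps)
qed

lemma Q_eq_hahn_sum: "Q a b n k N = (\<Sum>j\<le>N. hahn_coeff a k j * hahn_term (a + b) j n N)"
proof (cases "n \<le> N")
  case True
  have "Q a b n k N = (\<Sum>j\<le>min n k. hahn_coeff a k j * hahn_term (a + b) j n N)"
    unfolding Q_def sum_distrib_left using True by (intro sum.cong refl Q_summand_eq) auto
  also have "\<dots> = (\<Sum>j\<le>N. hahn_coeff a k j * hahn_term (a + b) j n N)"
    using True by (intro sum.mono_neutral_left) (auto simp: hahn_coeff_def hahn_term_def)
  finally show ?thesis .
next
  case False
  then show ?thesis
    by (simp add: Q_def hahn_term_def binomial_eq_0)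
qed

lemma Q_0_left [simp]: "Q a b 0 k N = 1"
  by (simp add: Q_def)

lemma Q_eq_0: "N < n \<Longrightarrow> Q a b n k N = 0"
  by (simp add: Q_def binomial_eq_0)

lemma hahn_term_raise:
  assumes "n \<le> N"
  shows "(of_nat n + c + 2) * hahn_term c j n N
           + (c + 1 - (of_nat N - of_nat n)) * hahn_term c j (Suc n) N
         = (2 * of_nat n + 2 - of_nat N + c) * hahn_term c j (Suc n) (Suc N)"
proof -
  define u where "u = of_nat n - of_nat N + c + 1"
  have shift: "u * pochhammer (u + 1) j = (u + of_nat j) * pochhammer u j"
    by (rule pochhammer_shift)
  consider (interior) "j \<le> n" | (top) "j = Suc n" | (beyond) "Suc n < j"
    by linarith
  then show ?thesis
  proof cases
    case interior
    define p q where "p = N - j" and "q = n - j"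
    have NN: "of_nat N = of_nat p + (of_nat j :: complex)"
      "of_nat n = of_nat q + (of_nat j :: complex)"
      using interior assms by (simp_all add: p_def q_def of_nat_diff)
    have "Suc n - j = Suc q" "Suc N - j = Suc p"
      using interior assms by (simp_all add: p_def q_def)
    then have "hahn_term c j n N = of_nat (p choose q) * pochhammer u j"
      "hahn_term c j (Suc n) N = of_nat (p choose Suc q) * pochhammer (u + 1) j"
      "hahn_term c j (Suc n) (Suc N) = of_nat (Suc p choose Suc q) * pochhammer u j"
      using interior by (simp_all add: hahn_term_def p_def q_def u_def algebra_simps)
    moreover note of_nat_Suc_mult_binomial_Suc [of q p, where 'a = complex]
    ultimately show ?thesis
      using shift NN u_def by (simp add: algebra_simps) algebra
  next
    case top
    then have "hahn_term c j n N = 0"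
      "hahn_term c j (Suc n) N = pochhammer (u + 1) j"
      "hahn_term c j (Suc n) (Suc N) = pochhammer u j"
      by (simp_all add: hahn_term_def u_def algebra_simps)
    moreover have "c + 1 - (of_nat N - of_nat n) = u"
      "2 * of_nat n + 2 - of_nat N + c = u + of_nat j"
      using top by (simp_all add: u_def algebra_simps)
    ultimately show ?thesis
      using shift by simp
  next
    case beyond
    then show ?thesis
      by (simp add: hahn_term_def)
  qed
qed

lemma Q_raise:
  assumes "k \<le> N" "n \<le> N"
  shows "(of_nat n + (a + b) + 2) * Q a b n k N
           + (a + b + 1 - (of_nat N - of_nat n)) * Q a b (Suc n) k N
         = (2 * of_nat n + 2 - of_nat N + (a + b)) * Q a b (Suc n) k (Suc N)"
proof -
  define c T where "c = hahn_coeff a k" and "T = hahn_term (a + b)"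
  have top: "c (Suc N) = 0"
    using assms by (simp add: c_def hahn_coeff_def)
  have "(of_nat n + (a + b) + 2) * Q a b n k N
          + (a + b + 1 - (of_nat N - of_nat n)) * Q a b (Suc n) k N
      = (\<Sum>j\<le>N. c j * ((of_nat n + (a + b) + 2) * T j n N
           + (a + b + 1 - (of_nat N - of_nat n)) * T j (Suc n) N))"
    unfolding Q_eq_hahn_sum sum_distrib_left sum.distrib [symmetric] c_def T_def
    by (rule sum.cong) (simp_all add: algebra_simps)
  also have "\<dots> = (\<Sum>j\<le>N. c j * ((2 * of_nat n + 2 - of_nat N + (a + b)) * T j (Suc n) (Suc N)))"
    using hahn_term_raise [OF \<open>n \<le> N\<close>] by (simp add: T_def)
  also have "\<dots> = (2 * of_nat n + 2 - of_nat N + (a + b)) * Q a b (Suc n) k (Suc N)"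
    unfolding Q_eq_hahn_sum c_def [symmetric] T_def [symmetric]
    by (simp add: top sum_distrib_left mult.left_commute)
  finally show ?thesis .
qed

lemma hahn_coeff_Suc:
  assumes "a + 1 + of_nat j \<noteq> 0"
  shows "(of_nat j + 1) * (a + 1 + of_nat j) * hahn_coeff a k (Suc j)
           = (of_nat j - of_nat k) * hahn_coeff a k j"
proof -
  have "(of_nat j + 1) * (a + 1 + of_nat j) * hahn_coeff a k (Suc j)
      = - ((-1) ^ j * ((of_nat j + 1) * of_nat (k choose Suc j)) / pochhammer (a + 1) j)"
    using assms by (simp add: hahn_coeff_def pochhammer_Suc)
  also have "\<dots> = - ((-1) ^ j * ((of_nat k - of_nat j) * of_nat (k choose j))
                      / pochhammer (a + 1) j)"
    by (simp only: of_nat_Suc_mult_binomial_Suc)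
  also have "\<dots> = (of_nat j - of_nat k) * hahn_coeff a k j"
    by (simp add: hahn_coeff_def minus_divide_left algebra_simps)
  finally show ?thesis .
qed

lemma hahn_term_lower_Suc:
  assumes "Suc i \<le> n" "n \<le> M"
  shows "(of_nat n + a + 1) * (of_nat n + 1) * hahn_term (a + b) (Suc i) (Suc n) (Suc M)
           + (b - (of_nat M - of_nat n)) * (of_nat M - of_nat n + 1)
             * hahn_term (a + b) (Suc i) n (Suc M)
         = (2 * of_nat n - of_nat M + a + b + 1)
           * ((of_nat M + 1 - of_nat (Suc i)) * hahn_term (a + b) (Suc i) n M
              + of_nat (Suc i) * (a + of_nat (Suc i)) * hahn_term (a + b) i n M)"
proof -
  define p q where "p = M - Suc i" and "q = n - Suc i"
  define z where "z = of_nat n - of_nat M + a + b"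
  define W where "W = pochhammer (z + 1) i"
  have NM: "of_nat M = of_nat p + (of_nat (Suc i) :: complex)"
    "of_nat n = of_nat q + (of_nat (Suc i) :: complex)"
    using assms by (simp_all add: p_def q_def of_nat_diff)
  have idx: "Suc M - Suc i = Suc p" "Suc n - Suc i = Suc q" "M - i = Suc p" "n - i = Suc q"
    "M - Suc i = p" "n - Suc i = q"
    using assms by (simp_all add: p_def q_def)
  then have
    "hahn_term (a + b) (Suc i) (Suc n) (Suc M)
       = of_nat (Suc p choose Suc q) * W * (z + 1 + of_nat i)"
    "hahn_term (a + b) (Suc i) n M = of_nat (p choose q) * W * (z + 1 + of_nat i)"
    "hahn_term (a + b) i n M = of_nat (Suc p choose Suc q) * W"
    using assms by (simp_all add: hahn_term_def W_def z_def pochhammer_Suc algebra_simps)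
  moreover have "hahn_term (a + b) (Suc i) n (Suc M) = of_nat (Suc p choose q) * z * W"
    using assms idx by (simp add: hahn_term_def W_def z_def pochhammer_rec algebra_simps)
  moreover note of_nat_Suc_times_binomial [of q p, where 'a = complex]
    of_nat_binomial_absorb_comp [of p q, where 'a = complex]
  moreover have "of_nat q + 1 = (of_nat (Suc q) :: complex)"
    "of_nat p - of_nat q + 1 = (of_nat (Suc (p - q)) :: complex)"
    using assms by (simp_all add: p_def q_def of_nat_diff)
  then have "of_nat q + 1 \<noteq> (0 :: complex)" "of_nat p - of_nat q + 1 \<noteq> (0 :: complex)"
    by (simp_all only: of_nat_eq_0_iff nat.distinct(1) not_False_eq_True)
  ultimately show ?thesis
    using NM unfolding z_def by simp algebra
qed

lemma hahn_term_lower: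
  assumes "n \<le> M"
  shows "(of_nat n + a + 1) * (of_nat n + 1) * hahn_term (a + b) j (Suc n) (Suc M)
           + (b - (of_nat M - of_nat n)) * (of_nat M - of_nat n + 1) * hahn_term (a + b) j n (Suc M)
         = (2 * of_nat n - of_nat M + a + b + 1)
           * ((of_nat M + 1 - of_nat j) * hahn_term (a + b) j n M
              + of_nat j * (a + of_nat j) * hahn_term (a + b) (j - 1) n M)"
proof -
  consider (zero) "j = 0" | (interior) i where "j = Suc i" "j \<le> n" | (top) "j = Suc n"
    | (beyond) "Suc n < j"
    by (cases j) force+
  then show ?thesis
  proof cases
    case zero
    from of_nat_Suc_times_binomial [of n M, where 'a = complex]
      of_nat_binomial_absorb_comp [of M n, where 'a = complex]
    show ?thesis
      unfolding zero by (simp add: hahn_term_def) algebra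
  next
    case interior
    then show ?thesis
      using hahn_term_lower_Suc [of i n M a b] assms by simp
  next
    case top
    define W where "W = pochhammer (of_nat n - of_nat M + a + b + 1) n"
    have T: "hahn_term (a + b) j (Suc n) (Suc M) = W * (2 * of_nat n - of_nat M + a + b + 1)"
      "hahn_term (a + b) j n (Suc M) = 0" "hahn_term (a + b) j n M = 0"
      "hahn_term (a + b) (j - 1) n M = W"
      using top by (simp_all add: hahn_term_def W_def pochhammer_Suc algebra_simps)
    show ?thesis
      unfolding T unfolding top by (simp add: algebra_simps)
  next
    case beyond
    then show ?thesis
      by (auto simp: hahn_term_def)
  qed
qed

lemma Q_lower:
  assumes "n \<le> M" and a: "\<And>j::nat. a \<noteq> - (of_nat j + 1)"
  shows "(of_nat n + a + 1) * (of_nat n + 1) * Q a b (Suc n) k (Suc M)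
           + (b - (of_nat M - of_nat n)) * (of_nat M - of_nat n + 1) * Q a b n k (Suc M)
         = (2 * of_nat n - of_nat M + a + b + 1) * (of_nat M + 1 - of_nat k) * Q a b n k M"
proof -
  define D where "D = 2 * of_nat n - of_nat M + a + b + 1"
  define c T where "c = hahn_coeff a k" and "T = hahn_term (a + b)"
  have coeff_shift: "(of_nat j + 1) * (a + 1 + of_nat j) * c (Suc j) = (of_nat j - of_nat k) * c j"
    for j
    unfolding c_def using a [of j]
    by (intro hahn_coeff_Suc) (auto simp: algebra_simps eq_neg_iff_add_eq_0)
  have "(of_nat n + a + 1) * (of_nat n + 1) * Q a b (Suc n) k (Suc M)
          + (b - (of_nat M - of_nat n)) * (of_nat M - of_nat n + 1) * Q a b n k (Suc M)
      = (\<Sum>j\<le>Suc M. c j * ((of_nat n + a + 1) * (of_nat n + 1) * T j (Suc n) (Suc M)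
           + (b - (of_nat M - of_nat n)) * (of_nat M - of_nat n + 1) * T j n (Suc M)))"
    unfolding Q_eq_hahn_sum sum_distrib_left sum.distrib [symmetric] c_def T_def
    by (rule sum.cong) (simp_all add: algebra_simps)
  also have "\<dots> = D * ((\<Sum>j\<le>Suc M. c j * ((of_nat M + 1 - of_nat j) * T j n M))
                      + (\<Sum>j\<le>Suc M. c j * (of_nat j * (a + of_nat j) * T (j - 1) n M)))"
    unfolding sum.distrib [symmetric] sum_distrib_left T_def D_def hahn_term_lower [OF \<open>n \<le> M\<close>]
    by (rule sum.cong) (simp_all add: algebra_simps)
  also have "(\<Sum>j\<le>Suc M. c j * ((of_nat M + 1 - of_nat j) * T j n M))
      = (\<Sum>j\<le>M. (of_nat M + 1 - of_nat j) * (c j * T j n M))"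
    by (simp add: mult.left_commute)
  also have "(\<Sum>j\<le>Suc M. c j * (of_nat j * (a + of_nat j) * T (j - 1) n M))
      = (\<Sum>j\<le>M. (of_nat j - of_nat k) * (c j * T j n M))"
  proof -
    have "c (Suc j) * (of_nat (Suc j) * (a + of_nat (Suc j)) * T (Suc j - 1) n M)
        = (of_nat j - of_nat k) * (c j * T j n M)" for j
      using arg_cong [OF coeff_shift [of j], of "\<lambda>x. x * T j n M"] by (simp add: algebra_simps)
    then show ?thesis
      by (simp only: sum.atMost_Suc_shift) simp
  qed
  also have "(\<Sum>j\<le>M. (of_nat M + 1 - of_nat j) * (c j * T j n M))
      + (\<Sum>j\<le>M. (of_nat j - of_nat k) * (c j * T j n M))
      = (of_nat M + 1 - of_nat k) * Q a b n k M"
    unfolding Q_eq_hahn_sum sum_distrib_left sum.distrib [symmetric] c_def T_def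
    by (rule sum.cong) (simp_all add: algebra_simps)
  finally show ?thesis
    by (simp add: D_def)
qed

lemma DeltaH_wvec: "DeltaH l1 l2 (wvec a b k N) = (\<lambda>p. (l1 + l2 + 2 * of_nat N) * wvec a b k N p)"
proof (intro ext, clarify)
  fix n m
  show "DeltaH l1 l2 (wvec a b k N) (n, m) = (l1 + l2 + 2 * of_nat N) * wvec a b k N (n, m)"
    by (auto simp: wvec_def DeltaH_apply)
qed

lemma DeltaE_wvec:
  assumes ab: "a + b \<notin> \<int>" and "k \<le> N"
  shows "DeltaE l1 l2 a b (wvec a b k N) = wvec a b k (N + 1)"
proof (intro ext, clarify)
  fix n m
  have D: "of_nat n - of_nat m + a + b + 1 \<noteq> 0"
    by (rule half_Dval_nonzero [OF ab])
  show "DeltaE l1 l2 a b (wvec a b k N) (n, m) = wvec a b k (N + 1) (n, m)"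
  proof (cases "n + m = N + 1")
    case False
    then show ?thesis by (auto simp: DeltaE_apply wvec_def)
  next
    case True
    show ?thesis
    proof (cases n)
      case 0
      with True D show ?thesis by (simp add: DeltaE_apply wvec_def)
    next
      case (Suc i)
      with True have "N = i + m"
        by simp
      then have "i \<le> N" and m: "of_nat m = of_nat N - (of_nat i :: complex)"
        by simp_all
      have w: "(if n = 0 then 0 else wvec a b k N (n - 1, m)) = Q a b i k N"
        "(if m = 0 then 0 else wvec a b k N (n, m - 1)) = Q a b (Suc i) k N"
        using True Suc by (auto simp: wvec_def Q_eq_0)
      have num: "(of_nat n + a + b + 1) * Q a b i k N + (a + b + 1 - of_nat m) * Q a b (Suc i) k N
          = (2 * of_nat i + 2 - of_nat N + (a + b)) * Q a b (Suc i) k (Suc N)"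
        unfolding m Suc using Q_raise [of k N i a b] \<open>k \<le> N\<close> \<open>i \<le> N\<close>
        by (simp add: algebra_simps)
      have den: "of_nat n - of_nat m + a + b + 1 = 2 * of_nat i + 2 - of_nat N + (a + b)"
        unfolding m Suc by (simp add: algebra_simps)
      show ?thesis
        using D True Suc unfolding DeltaE_apply w num den by (simp add: wvec_def)
    qed
  qed
qed

lemma DeltaF_wvec:
  assumes ab: "a + b \<notin> \<int>" and a: "\<And>j::nat. a \<noteq> - (of_nat j + 1)" and "k \<le> N"
  shows "DeltaF l1 l2 a b (wvec a b k N) =
           (if N = k then (\<lambda>p. 0) else (\<lambda>p. - of_nat (N - k) * wvec a b k (N - 1) p))"
proof (intro ext, clarify)
  fix n m
  have D: "of_nat n - of_nat m + a + b + 1 \<noteq> 0"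
    by (rule half_Dval_nonzero [OF ab])
  have "DeltaF l1 l2 a b (wvec a b k N) (n, m)
      = - ((of_nat N - of_nat k) * wvec a b k (N - 1) (n, m))"
  proof (cases "N = Suc (n + m)")
    case True
    have "(of_nat n + a + 1) * (of_nat n + 1) * wvec a b k N (Suc n, m)
          + (b - of_nat m) * (of_nat m + 1) * wvec a b k N (n, Suc m)
        = (of_nat n - of_nat m + a + b + 1) * ((of_nat N - of_nat k) * wvec a b k (N - 1) (n, m))"
      using Q_lower [of n "n + m" a b k] a True by (simp add: wvec_def algebra_simps)
    with D show ?thesis
      by (simp add: DeltaF_apply)
  next
    case False
    then show ?thesis
      using \<open>k \<le> N\<close> by (auto simp: DeltaF_apply wvec_def)
  qed
  then show "DeltaF l1 l2 a b (wvec a b k N) (n, m) =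
      (if N = k then (\<lambda>p. 0) else (\<lambda>p. - of_nat (N - k) * wvec a b k (N - 1) p)) (n, m)"
    using \<open>k \<le> N\<close> by (simp add: of_nat_diff minus_mult_left)
qed

theorem mainTheorem1:
  fixes l1 l2 a b :: complex
  assumes ab: "a + b \<notin> \<int>"
    and a: "\<forall>j::nat. a \<noteq> - (of_nat j + 1)"
  shows "(\<forall>v::tvec. finite {p. v p \<noteq> 0} \<longrightarrow>
            commutator (DeltaH l1 l2) (DeltaE l1 l2 a b) v = (\<lambda>p. 2 * DeltaE l1 l2 a b v p)
          \<and> commutator (DeltaH l1 l2) (DeltaF l1 l2 a b) v = (\<lambda>p. - 2 * DeltaF l1 l2 a b v p)
          \<and> commutator (DeltaE l1 l2 a b) (DeltaF l1 l2 a b) v = v)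
       \<and> (\<forall>k N::nat. k \<le> N \<longrightarrow>
            DeltaH l1 l2 (wvec a b k N) = (\<lambda>p. (l1 + l2 + 2 * of_nat N) * wvec a b k N p)
          \<and> DeltaE l1 l2 a b (wvec a b k N) = wvec a b k (N + 1)
          \<and> DeltaF l1 l2 a b (wvec a b k N) =
              (if N = k then (\<lambda>p. 0)
               else (\<lambda>p. - of_nat (N - k) * wvec a b k (N - 1) p)))"
proof (intro conjI allI impI)
  \<comment> \<open>The commutation relations hold for all coefficient functions.\<close>
  fix v :: tvec
  show "commutator (DeltaH l1 l2) (DeltaE l1 l2 a b) v = (\<lambda>p. 2 * DeltaE l1 l2 a b v p)"
    by (rule DeltaH_DeltaE_commutator)
  show "commutator (DeltaH l1 l2) (DeltaF l1 l2 a b) v = (\<lambda>p. - 2 * DeltaF l1 l2 a b v p)"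
    by (rule DeltaH_DeltaF_commutator)
  show "commutator (DeltaE l1 l2 a b) (DeltaF l1 l2 a b) v = v"
    by (rule DeltaE_DeltaF_commutator [OF ab])
next
  fix k N :: nat
  assume "k \<le> N"
  show "DeltaH l1 l2 (wvec a b k N) = (\<lambda>p. (l1 + l2 + 2 * of_nat N) * wvec a b k N p)"
    by (rule DeltaH_wvec)
  show "DeltaE l1 l2 a b (wvec a b k N) = wvec a b k (N + 1)"
    by (rule DeltaE_wvec [OF ab \<open>k \<le> N\<close>])
  show "DeltaF l1 l2 a b (wvec a b k N) =
      (if N = k then (\<lambda>p. 0) else (\<lambda>p. - of_nat (N - k) * wvec a b k (N - 1) p))"
    using a by (intro DeltaF_wvec [OF ab _ \<open>k \<le> N\<close>]) blast
qed

end
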